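(* There is a deterministic algorithm ($1$-Cover) which, given $n \ge 81$ elements, makes at most $3 n^{3/2}$ comparisons and outputs a $1$-max-set of size at most $\sqrt{n}$.
   Context: Model of imprecise comparisons: there are $n$ elements, each with a fixed unknown real value; we identify an element with its value. Asked to compare $x_i$ and $x_j$, the comparator answers either "$x_i \ge x_j$" or "$x_j \ge x_i$". If $|x_i-x_j|>1$ the answer is correct; if $|x_i-x_j|\le 1$ the answer is arbitrary (possibly adversarial and adaptive). Let $x^*$ be the maximum value of an input element. A $k$-max-set is a subset of the input elements containing at least one element of value at least $x^*-k$. Bounds on comparisons are worst case over inputs and comparator behaviours, and the guarantee must hold for all of them. *)

theory Defs
  imports Complex_Main
begin

text \<open>A deterministic comparison algorithm on n elements (indexed 0..n-1) is a
finite decision tree.  Node Cmp i j ge le asks to compare elements i and j;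
the subtree ge is followed if the comparator answers "x_i >= x_j",
the subtree le if it answers "x_j >= x_i".\<close>

datatype dtree = Leaf "nat set" | Cmp nat nat dtree dtree

fun wf_tree :: "nat \<Rightarrow> dtree \<Rightarrow> bool" where
  "wf_tree n (Leaf S) = True"
| "wf_tree n (Cmp i j t1 t2) = (i < n \<and> j < n \<and> wf_tree n t1 \<and> wf_tree n t2)"

text \<open>Imprecise comparator: the answer "x_i >= x_j" is admissible unless it is
wrong by more than 1, i.e. iff x_j - x_i <= 1 (if |x_i - x_j| > 1 the answer
must be correct, otherwise it is arbitrary).  Since the comparator may be
adaptive and adversarial, all admissible answer sequences must be considered.
runs x t is the set of all (output, number of comparisons made) pairs of
executions of t on input values x under some admissible comparator behaviour.\<close>
fun runs :: "(nat \<Rightarrow> real) \<Rightarrow> dtree \<Rightarrow> (nat set \<times> nat) set" where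
  "runs x (Leaf S) = {(S, 0)}"
| "runs x (Cmp i j t1 t2) =
     (if x j - x i \<le> 1 then (\<lambda>(S, k). (S, Suc k)) ` runs x t1 else {}) \<union>
     (if x i - x j \<le> 1 then (\<lambda>(S, k). (S, Suc k)) ` runs x t2 else {})"

definition max_val :: "nat \<Rightarrow> (nat \<Rightarrow> real) \<Rightarrow> real" where
  "max_val n x = Max (x ` {..<n})"

definition is_max_set :: "real \<Rightarrow> nat \<Rightarrow> (nat \<Rightarrow> real) \<Rightarrow> nat set \<Rightarrow> bool" where
  "is_max_set k n x S \<longleftrightarrow> S \<subseteq> {..<n} \<and> (\<exists>i\<in>S. x i \<ge> max_val n x - k)"

end

theory Submission
  imports Defs "HOL-Library.Discrete_Functions"
begin

text \<open>Let \<open>s = \<lfloor>\<surd>n\<rfloor>\<close> and \<open>q = 3s + 1\<close>.  The algorithm maintains a pool of at most \<open>q\<close>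
  elements that have all been compared with each other, and inserts the input elements into it
  one at a time, at a cost of at most \<open>q - 1\<close> comparisons each; this gives the bound \<open>3 s n\<close>.
  Whenever the pool is full, or no element is left to insert, some pool element \<open>w\<close> (a king of
  the tournament of answers) has been declared \<open>\<ge>\<close> at least half of the other pool elements.
  Each of these is at most \<open>x\<^sub>w + 1\<close>, so \<open>w\<close> is kept for the output and half of the pool
  is discarded without losing a \<open>1\<close>-approximate maximum.  A full pool thus yields one kept
  element per \<open>q/2\<close> input elements, about \<open>2s/3\<close> in total, and the final halving of the pool
  adds about \<open>log q\<close> more; the algorithm stops as soon as at most \<open>s\<close> candidates remain.  This
  count is estimated directly for \<open>s \<ge> 18\<close> and evaluated for the remaining \<open>81 \<le> n < 18\<^sup>2\<close>.\<close>

text \<open>A pair \<open>(a, b) \<in> W\<close> records the answer \<open>x\<^sub>a \<ge> x\<^sub>b\<close>.\<close>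

definition admissible :: "(nat \<Rightarrow> real) \<Rightarrow> (nat \<times> nat) set \<Rightarrow> bool" where
  "admissible x W \<longleftrightarrow> (\<forall>(a, b) \<in> W. x b - x a \<le> 1)"

fun compare_all :: "nat \<Rightarrow> nat list \<Rightarrow> (nat \<times> nat) set \<Rightarrow> ((nat \<times> nat) set \<Rightarrow> dtree) \<Rightarrow> dtree"
where
  "compare_all y [] W t = t W"
| "compare_all y (z # zs) W t =
     Cmp y z (compare_all y zs (insert (y, z) W) t) (compare_all y zs (insert (z, y) W) t)"

lemma wf_tree_compare_all:
  "y < n \<Longrightarrow> set zs \<subseteq> {..<n} \<Longrightarrow> (\<And>W. wf_tree n (t W)) \<Longrightarrow> wf_tree n (compare_all y zs W t)"
  by (induction zs arbitrary: W) auto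

lemma runs_compare_all:
  assumes "(S, c) \<in> runs x (compare_all y zs W t)" "admissible x W"
  shows "\<exists>W' c'. c = c' + length zs \<and> (S, c') \<in> runs x (t W') \<and> admissible x W' \<and> W \<subseteq> W' \<and>
           (\<forall>z \<in> set zs. (y, z) \<in> W' \<or> (z, y) \<in> W')"
  using assms
proof (induction zs arbitrary: W c)
  case Nil
  then show ?case by auto
next
  case (Cons z zs)
  then obtain c' W1 where c: "c = Suc c'" and run: "(S, c') \<in> runs x (compare_all y zs W1 t)"
    and W1: "W1 = insert (y, z) W \<or> W1 = insert (z, y) W" and "admissible x W1"
    by (auto simp: admissible_def split: if_splits)
  with Cons.IH obtain W' c'' where "c' = c'' + length zs" "(S, c'') \<in> runs x (t W')"
    "admissible x W'" "W1 \<subseteq> W'" "\<forall>z \<in> set zs. (y, z) \<in> W' \<or> (z, y) \<in> W'"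
    by blast
  then show ?case using c W1 by (intro exI[of _ W'] exI[of _ c'']) auto
qed

section \<open>Tournaments\<close>

definition beaten :: "'a set \<Rightarrow> ('a \<times> 'a) set \<Rightarrow> 'a \<Rightarrow> 'a set" where
  "beaten P W w = {b \<in> P. b \<noteq> w \<and> (w, b) \<in> W}"

lemma tournament_beats_half:
  assumes fin: "finite P" and "P \<noteq> {}"
    and total: "\<forall>a \<in> P. \<forall>b \<in> P. a \<noteq> b \<longrightarrow> (a, b) \<in> W \<or> (b, a) \<in> W"
  shows "\<exists>w \<in> P. card P \<le> 2 * card (beaten P W w) + 1"
proof (rule ccontr)
  assume "\<not> ?thesis"
  then have few: "2 * card (beaten P W w) + 2 \<le> card P" if "w \<in> P" for w
    using that by force
  define A where "A = Sigma P (beaten P W)"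
  have fin_A: "finite A" unfolding A_def beaten_def using fin by auto
  have "P \<times> P \<subseteq> A \<union> prod.swap ` A \<union> (\<lambda>a. (a, a)) ` P"
    using total unfolding A_def beaten_def by (auto simp: image_iff; blast)
  then have "card (P \<times> P) \<le> card (A \<union> prod.swap ` A \<union> (\<lambda>a. (a, a)) ` P)"
    using fin fin_A by (intro card_mono) auto
  also have "\<dots> \<le> card A + card A + card P"
    using card_Un_le[of "A \<union> prod.swap ` A" "(\<lambda>a. (a, a)) ` P"] card_Un_le[of A "prod.swap ` A"]
      card_image_le[OF fin_A, of prod.swap] card_image_le[OF fin, of "\<lambda>a. (a, a)"]
    by linarith
  finally have upper: "card P * card P \<le> 2 * card A + card P" by (simp add: card_cartesian_product)
  have "card A = (\<Sum>w \<in> P. card (beaten P W w))"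
    unfolding A_def beaten_def using fin by simp
  then have "2 * card A + 2 * card P = (\<Sum>w \<in> P. 2 * card (beaten P W w)) + (\<Sum>w \<in> P. 2)"
    by (simp add: sum_distrib_left)
  also have "\<dots> = (\<Sum>w \<in> P. 2 * card (beaten P W w) + 2)"
    by (rule sum.distrib[symmetric])
  also have "\<dots> \<le> (\<Sum>w \<in> P. card P)"
    using few by (rule sum_mono)
  finally have "2 * card A + 2 * card P \<le> card P * card P" by simp
  moreover have "0 < card P" using fin \<open>P \<noteq> {}\<close> by (simp add: card_gt_0_iff)
  ultimately show False using upper by linarith
qed

definition king :: "'a set \<Rightarrow> ('a \<times> 'a) set \<Rightarrow> 'a" where
  "king P W = (SOME w. w \<in> P \<and> card P \<le> 2 * card (beaten P W w) + 1)"

text \<open>Exactly \<open>card P div 2\<close> victims are discarded, even if the king beat more, so that the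
  sizes of the sets in the algorithm do not depend on the answers.\<close>

definition king_victims :: "'a set \<Rightarrow> ('a \<times> 'a) set \<Rightarrow> 'a set" where
  "king_victims P W = (SOME V. V \<subseteq> beaten P W (king P W) \<and> card V = card P div 2)"

lemma king_and_victims:
  assumes "finite P" "P \<noteq> {}" "\<forall>a \<in> P. \<forall>b \<in> P. a \<noteq> b \<longrightarrow> (a, b) \<in> W \<or> (b, a) \<in> W"
  shows "king P W \<in> P" "king_victims P W \<subseteq> beaten P W (king P W)"
    "card (king_victims P W) = card P div 2"
proof -
  have "king P W \<in> P \<and> card P \<le> 2 * card (beaten P W (king P W)) + 1"
    unfolding king_def using tournament_beats_half[OF assms] by (metis (no_types, lifting) someI_ex)
  then show "king P W \<in> P" by simp
  have "card P div 2 \<le> card (beaten P W (king P W))"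
    using \<open>king P W \<in> P \<and> _\<close> by linarith
  then obtain V where "V \<subseteq> beaten P W (king P W)" "card V = card P div 2"
    by (meson obtain_subset_with_card_n)
  then have "king_victims P W \<subseteq> beaten P W (king P W) \<and> card (king_victims P W) = card P div 2"
    unfolding king_victims_def by (rule someI[of _ V, OF conjI])
  then show "king_victims P W \<subseteq> beaten P W (king P W)" "card (king_victims P W) = card P div 2"
    by simp_all
qed

section \<open>The algorithm\<close>

text \<open>State of the algorithm: kings \<open>K\<close> (kept for the output), a pool \<open>P\<close> of at most \<open>q\<close>
  pairwise compared elements, the elements \<open>R\<close> not yet inserted into the pool, and the answers
  \<open>W\<close> received so far.  The fuel \<open>f\<close> only serves termination.\<close>

primrec cover :: "nat \<Rightarrow> nat \<Rightarrow> nat \<Rightarrow> nat set \<Rightarrow> nat set \<Rightarrow> nat set \<Rightarrow> (nat \<times> nat) set \<Rightarrow> dtree"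
where
  "cover s q 0 K P R W = Leaf (K \<union> P \<union> R)"
| "cover s q (Suc f) K P R W =
    (if card K + card P + card R \<le> s then Leaf (K \<union> P \<union> R)
     else if R \<noteq> {} \<and> card P < q then
       compare_all (Min R) (sorted_list_of_set P) W (cover s q f K (insert (Min R) P) (R - {Min R}))
     else if P = {} then Leaf (K \<union> P \<union> R)
     else cover s q f (insert (king P W) K) (P - insert (king P W) (king_victims P W)) R W)"

lemma wf_tree_cover: "P \<union> R \<subseteq> {..<n} \<Longrightarrow> wf_tree n (cover s q f K P R W)"
proof (induction f arbitrary: K P R W)
  case 0
  then show ?case by simp
next
  case (Suc f)
  have eliminate:
    "wf_tree n (cover s q f (insert (king P W) K) (P - insert (king P W) (king_victims P W)) R W)"
    using Suc.prems by (intro Suc.IH) auto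
  show ?case
  proof (cases "R = {}")
    case True
    then show ?thesis using eliminate by simp
  next
    case False
    then have "Min R \<in> R" using Suc.prems finite_subset by (intro Min_in) auto
    then have "wf_tree n (compare_all (Min R) (sorted_list_of_set P) W
                 (cover s q f K (insert (Min R) P) (R - {Min R})))"
      using Suc.prems finite_subset[of P "{..<n}"] by (intro wf_tree_compare_all Suc.IH) auto
    then show ?thesis using eliminate False by simp
  qed
qed

definition covers :: "nat \<Rightarrow> (nat \<Rightarrow> real) \<Rightarrow> nat set \<Rightarrow> bool" where
  "covers n x S \<longleftrightarrow> S \<subseteq> {..<n} \<and> (\<forall>i < n. \<exists>w \<in> S. x i - x w \<le> 1)"

lemma covers_imp_is_max_set:
  assumes "0 < n" "covers n x S"
  shows "is_max_set 1 n x S"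
proof -
  obtain m where "m < n" "x m = max_val n x"
    using Max_in[of "x ` {..<n}"] assms(1) unfolding max_val_def by fastforce
  then show ?thesis using assms(2) unfolding covers_def is_max_set_def by force
qed

definition cover_inv ::
  "nat \<Rightarrow> (nat \<Rightarrow> real) \<Rightarrow> nat set \<Rightarrow> nat set \<Rightarrow> nat set \<Rightarrow> (nat \<times> nat) set \<Rightarrow> bool" where
  "cover_inv n x K P R W \<longleftrightarrow>
     K \<union> P \<union> R \<subseteq> {..<n} \<and> K \<inter> P = {} \<and> K \<inter> R = {} \<and> P \<inter> R = {} \<and> admissible x W \<and>
     (\<forall>a \<in> P. \<forall>b \<in> P. a \<noteq> b \<longrightarrow> (a, b) \<in> W \<or> (b, a) \<in> W) \<and>
     (\<forall>i < n. i \<in> P \<union> R \<or> (\<exists>w \<in> K. x i - x w \<le> 1))"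

lemma cover_inv_covers:
  assumes "cover_inv n x K P R W"
  shows "covers n x (K \<union> P \<union> R)"
  unfolding covers_def
proof (intro conjI allI impI)
  show "K \<union> P \<union> R \<subseteq> {..<n}" using assms unfolding cover_inv_def by blast
  fix i assume "i < n"
  then have "i \<in> P \<union> R \<or> (\<exists>w \<in> K. x i - x w \<le> 1)" using assms unfolding cover_inv_def by blast
  then show "\<exists>w \<in> K \<union> P \<union> R. x i - x w \<le> 1" by force
qed

lemma cover_inv_insert:
  assumes "cover_inv n x K P R W" "y \<in> R" "admissible x W'" "W \<subseteq> W'"
    "\<forall>z \<in> P. (y, z) \<in> W' \<or> (z, y) \<in> W'"
  shows "cover_inv n x K (insert y P) (R - {y}) W'"
proof -
  have "\<forall>a \<in> insert y P. \<forall>b \<in> insert y P. a \<noteq> b \<longrightarrow> (a, b) \<in> W' \<or> (b, a) \<in> W'"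
    using assms(1,4,5) unfolding cover_inv_def by blast
  moreover have "\<forall>i < n. i \<in> insert y P \<union> (R - {y}) \<or> (\<exists>w \<in> K. x i - x w \<le> 1)"
    using assms(1,2) unfolding cover_inv_def by blast
  ultimately show ?thesis using assms(1-3) unfolding cover_inv_def by blast
qed

lemma cover_inv_eliminate:
  assumes "cover_inv n x K P R W" "w \<in> P" "V \<subseteq> beaten P W w"
  shows "cover_inv n x (insert w K) (P - insert w V) R W"
proof -
  from assms(1) have sub: "K \<union> P \<union> R \<subseteq> {..<n}" and disj: "K \<inter> P = {}" "K \<inter> R = {}" "P \<inter> R = {}"
    and adm: "admissible x W" and total: "\<forall>a \<in> P. \<forall>b \<in> P. a \<noteq> b \<longrightarrow> (a, b) \<in> W \<or> (b, a) \<in> W"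
    and cov: "\<forall>i < n. i \<in> P \<union> R \<or> (\<exists>w \<in> K. x i - x w \<le> 1)"
    unfolding cover_inv_def by auto
  have "\<exists>v \<in> insert w K. x i - x v \<le> 1" if "i < n" "i \<notin> (P - insert w V) \<union> R" for i
  proof (cases "i \<in> insert w V")
    case True
    then have "x i - x w \<le> 1"
      using adm assms(3) unfolding admissible_def beaten_def by auto
    then show ?thesis by blast
  next
    case False
    then show ?thesis using cov that by blast
  qed
  then have "\<forall>i < n. i \<in> (P - insert w V) \<union> R \<or> (\<exists>v \<in> insert w K. x i - x v \<le> 1)"
    by blast
  moreover have "insert w K \<union> (P - insert w V) \<union> R \<subseteq> {..<n}" using sub assms(2) by blast
  moreover have "insert w K \<inter> (P - insert w V) = {}" "insert w K \<inter> R = {}" "(P - insert w V) \<inter> R = {}"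
    using disj assms(2) by blast+
  moreover have "\<forall>a \<in> P - insert w V. \<forall>b \<in> P - insert w V. a \<noteq> b \<longrightarrow> (a, b) \<in> W \<or> (b, a) \<in> W"
    using total by blast
  ultimately show ?thesis using adm unfolding cover_inv_def by (intro conjI) assumption+
qed

lemma card_Un3_le: "card (A \<union> B \<union> C) \<le> card A + card B + card C"
  using card_Un_le[of "A \<union> B" C] card_Un_le[of A B] by linarith

lemma cover_step_insert:
  assumes "(S, c) \<in> runs x (compare_all (Min R) (sorted_list_of_set P) W
             (cover s q f K (insert (Min R) P) (R - {Min R})))"
    and inv: "cover_inv n x K P R W" and "R \<noteq> {}"
  obtains W' c' where "c = c' + card P"
    "(S, c') \<in> runs x (cover s q f K (insert (Min R) P) (R - {Min R}) W')"
    "cover_inv n x K (insert (Min R) P) (R - {Min R}) W'"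
    "card (insert (Min R) P) = card P + 1" "card (R - {Min R}) = card R - 1"
proof -
  have fin: "finite P" "finite R" using inv finite_subset[of _ "{..<n}"] unfolding cover_inv_def by auto
  then have "Min R \<in> R" using \<open>R \<noteq> {}\<close> by simp
  then have "Min R \<notin> P" using inv unfolding cover_inv_def by blast
  from runs_compare_all[OF assms(1)] obtain W' c' where "c = c' + card P"
    and "(S, c') \<in> runs x (cover s q f K (insert (Min R) P) (R - {Min R}) W')"
    and "admissible x W'" "W \<subseteq> W'" "\<forall>z \<in> P. (Min R, z) \<in> W' \<or> (z, Min R) \<in> W'"
    using inv fin(1) unfolding cover_inv_def by auto
  moreover have "card (insert (Min R) P) = card P + 1" "card (R - {Min R}) = card R - 1"
    using \<open>Min R \<in> R\<close> \<open>Min R \<notin> P\<close> fin by simp_all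
  ultimately show ?thesis using that cover_inv_insert[OF inv \<open>Min R \<in> R\<close>] by blast
qed

lemma cover_step_eliminate:
  assumes inv: "cover_inv n x K P R W" and "P \<noteq> {}"
  shows "cover_inv n x (insert (king P W) K) (P - insert (king P W) (king_victims P W)) R W"
    and "card (insert (king P W) K) = card K + 1"
    and "card (P - insert (king P W) (king_victims P W)) = card P - 1 - card P div 2"
proof -
  let ?w = "king P W" and ?V = "king_victims P W"
  have fin: "finite K" "finite P" using inv finite_subset[of _ "{..<n}"] unfolding cover_inv_def by auto
  have "\<forall>a \<in> P. \<forall>b \<in> P. a \<noteq> b \<longrightarrow> (a, b) \<in> W \<or> (b, a) \<in> W"
    using inv unfolding cover_inv_def by blast
  note king = king_and_victims[OF fin(2) \<open>P \<noteq> {}\<close> this]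
  show "cover_inv n x (insert ?w K) (P - insert ?w ?V) R W"
    using cover_inv_eliminate[OF inv king(1,2)] .
  have "?w \<notin> K" using inv king(1) unfolding cover_inv_def by blast
  then show "card (insert ?w K) = card K + 1" using fin(1) by simp
  have sub: "insert ?w ?V \<subseteq> P" and "?w \<notin> ?V" using king(1,2) unfolding beaten_def by auto
  have "finite (insert ?w ?V)" using sub fin(2) by (rule finite_subset)
  then have "card (P - insert ?w ?V) = card P - card (insert ?w ?V)"
    using sub by (rule card_Diff_subset)
  also have "card (insert ?w ?V) = card P div 2 + 1"
    using \<open>finite (insert ?w ?V)\<close> \<open>?w \<notin> ?V\<close> king(3) by simp
  finally show "card (P - insert ?w ?V) = card P - 1 - card P div 2" by simp
qed

section \<open>Evolution of the sizes\<close>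

text \<open>\<open>final_size s q k p r\<close> follows the numbers \<open>k\<close>, \<open>p\<close>, \<open>r\<close> of kings, pool elements and
  elements not yet inserted through a run of \<open>cover\<close> and returns the bound \<open>k + p + r\<close> on the
  size of the output.  It refills the pool in one step rather than
  element by element (cf. \<open>final_size_insert\<close>), which keeps the evaluation in
  \<open>final_size_sqrt_small\<close> fast.\<close>

function final_size :: "nat \<Rightarrow> nat \<Rightarrow> nat \<Rightarrow> nat \<Rightarrow> nat \<Rightarrow> nat" where
  "final_size s q k p r =
     (if k + p + r \<le> s then k + p + r
      else if 0 < r \<and> p < q then final_size s q k (min q (p + r)) (p + r - min q (p + r))
      else if p = 0 then k + p + r
      else final_size s q (k + 1) (p - 1 - p div 2) r)"
  by auto
termination by (relation "measure (\<lambda>(s, q, k, p, r). 2 * r + p)") auto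

declare final_size.simps [simp del]

lemma final_size_insert:
  assumes "\<not> k + p + r \<le> s" "0 < r" "p < q"
  shows "final_size s q k (p + 1) (r - 1) = final_size s q k p r"
proof -
  have fill: "final_size s q k p r = final_size s q k (min q (p + r)) (p + r - min q (p + r))"
    using assms by (subst final_size.simps) auto
  show ?thesis
  proof (cases "0 < r - 1 \<and> p + 1 < q")
    case True
    then show ?thesis using assms fill by (subst final_size.simps) (auto simp: min_def)
  next
    case False
    then have "min q (p + r) = p + 1" "p + r - min q (p + r) = r - 1"
      using assms by (auto simp: min_def)
    then show ?thesis using fill by simp
  qed
qed

lemma final_size_halving:
  "p < 2 ^ e \<Longrightarrow> k + e \<le> s \<Longrightarrow> final_size s q k p 0 \<le> s"
proof (induction e arbitrary: k p)
  case 0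
  then show ?case by (subst final_size.simps) auto
next
  case (Suc e)
  show ?case
  proof (cases "k + p \<le> s")
    case True
    then show ?thesis by (subst final_size.simps) auto
  next
    case False
    then have "final_size s q k p 0 = final_size s q (k + 1) (p - 1 - p div 2) 0"
      using Suc.prems by (subst final_size.simps) auto
    moreover have "p - 1 - p div 2 < 2 ^ e" using Suc.prems(1) by auto
    ultimately show ?thesis using Suc.IH[of "p - 1 - p div 2" "k + 1"] Suc.prems(2) by simp
  qed
qed

text \<open>The number of eliminations performed from a full pool of size \<open>q\<close> while \<open>u\<close> elements
  are still in the pool or not yet inserted.\<close>

definition full_rounds :: "nat \<Rightarrow> nat \<Rightarrow> nat" where
  "full_rounds q u = (if u < q then 0 else (u - q) div (1 + q div 2) + 1)"

lemma full_rounds_eliminate: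
  assumes "0 < q" "q \<le> u"
  shows "full_rounds q (u - 1 - q div 2) + 1 = full_rounds q u"
proof (cases "u < q + 1 + q div 2")
  case True
  then show ?thesis using assms by (auto simp: full_rounds_def)
next
  case False
  then have "(u - 1 - q div 2 - q) div (1 + q div 2) + 1 = (u - q) div (1 + q div 2)"
    by (simp add: le_div_geq diff_diff_add add.commute)
  then show ?thesis using False assms by (auto simp: full_rounds_def)
qed

lemma final_size_le:
  "p \<le> q \<Longrightarrow> 0 < q \<Longrightarrow> q \<le> 2 ^ e \<Longrightarrow> k + full_rounds q (p + r) + e \<le> s \<Longrightarrow>
    final_size s q k p r \<le> s"
proof (induction s q k p r rule: final_size.induct)
  case (1 s q k p r)
  consider "k + p + r \<le> s" | "\<not> k + p + r \<le> s" "0 < r \<and> p < q"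
    | "\<not> k + p + r \<le> s" "\<not> (0 < r \<and> p < q)" "p = 0"
    | "\<not> k + p + r \<le> s" "\<not> (0 < r \<and> p < q)" "p \<noteq> 0" "p < q"
    | "\<not> k + p + r \<le> s" "\<not> (0 < r \<and> p < q)" "p \<noteq> 0" "p = q"
    using "1.prems"(1) by linarith
  then show ?case
  proof cases
    case 1
    then show ?thesis by (subst final_size.simps) auto
  next
    case 2
    then show ?thesis
      using "1.IH"(1) "1.prems" by (subst final_size.simps) (auto simp: min_def add.commute)
  next
    case 3
    then show ?thesis using "1.prems" by (subst final_size.simps) (auto simp: full_rounds_def)
  next
    case 4
    then have "r = 0" "full_rounds q p = 0" by (auto simp: full_rounds_def)
    then show ?thesis using 4 "1.prems" final_size_halving[of p e k s q] by simp
  next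
    case 5
    have "full_rounds q (p - 1 - p div 2 + r) + 1 = full_rounds q (p + r)"
      using full_rounds_eliminate[of q "p + r"] 5 "1.prems"(2) by simp
    then show ?thesis
      using 5 "1.IH"(2) "1.prems" by (subst final_size.simps) auto
  qed
qed

lemma nine_mul_add_seven_le_two_power: "6 \<le> a \<Longrightarrow> 9 * a + 7 \<le> (2::nat) ^ a"
  by (induction a rule: dec_induct) simp_all

lemma final_size_sqrt_large:
  assumes "18 \<le> s" "s\<^sup>2 \<le> n" "n < (s + 1)\<^sup>2"
  shows "final_size s (3 * s + 1) 0 0 n \<le> s"
proof -
  define q where "q = 3 * s + 1"
  define e where "e = s div 3"
  have "3 * e \<le> s" "s \<le> 3 * e + 2" "6 \<le> e" using assms(1) unfolding e_def by linarith+
  then have "q \<le> 2 ^ e" using nine_mul_add_seven_le_two_power[of e] unfolding q_def by linarith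
  \<comment> \<open>At most \<open>(n - q) / (q/2) < 2s/3 \<le> s - e\<close> eliminations happen from a full pool.\<close>
  have "2 * s \<le> 3 * (s - e)" using \<open>3 * e \<le> s\<close> by linarith
  moreover have "3 * s \<le> 2 * (1 + q div 2)" unfolding q_def by presburger
  ultimately have "(2 * s) * (3 * s) \<le> (3 * (s - e)) * (2 * (1 + q div 2))" by (rule mult_le_mono)
  then have "s * s \<le> (s - e) * (1 + q div 2)" by simp
  moreover have "q \<le> n"
  proof -
    have "18 * s \<le> s * s" using assms(1) by (rule mult_le_mono1)
    then show ?thesis using assms(1,2) unfolding q_def power2_eq_square by linarith
  qed
  moreover have "n - q < s * s"
    using assms(3) \<open>q \<le> n\<close> unfolding q_def by (simp add: power2_eq_square)
  ultimately have "(n - q) div (1 + q div 2) < s - e"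
    by (metis less_le_trans less_mult_imp_div_less)
  then have "full_rounds q n + e \<le> s"
    using \<open>q \<le> n\<close> \<open>3 * e \<le> s\<close> unfolding full_rounds_def by simp
  then show ?thesis using final_size_le[of 0 q e 0 n s] \<open>q \<le> 2 ^ e\<close> unfolding q_def by simp
qed

text \<open>For \<open>s < 18\<close> the estimate of \<open>final_size_le\<close> is too weak, so the simulation is evaluated.\<close>

lemma final_size_sqrt_small:
  "\<forall>s \<in> set [9..<18]. \<forall>n \<in> set [s\<^sup>2..<(s + 1)\<^sup>2]. final_size s (3 * s + 1) 0 0 n \<le> s"
  by code_simp

lemma final_size_sqrt:
  assumes "81 \<le> n" "s\<^sup>2 \<le> n" "n < (s + 1)\<^sup>2"
  shows "final_size s (3 * s + 1) 0 0 n \<le> s"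
proof (cases "18 \<le> s")
  case True
  then show ?thesis using final_size_sqrt_large assms(2,3) by blast
next
  case False
  have "9 \<le> s"
  proof (rule ccontr)
    assume "\<not> 9 \<le> s"
    then have "(s + 1)\<^sup>2 \<le> 9\<^sup>2" by (intro power_mono) simp_all
    then show False using assms by simp
  qed
  then have "s \<in> set [9..<18]" "n \<in> set [s\<^sup>2..<(s + 1)\<^sup>2]" using False assms(2,3) by auto
  then show ?thesis using final_size_sqrt_small by blast
qed

lemma runs_cover:
  assumes "(S, c) \<in> runs x (cover s q f K P R W)" "cover_inv n x K P R W" "card P \<le> q" "0 < q"
  shows "covers n x S \<and> c \<le> (q - 1) * card R \<and>
    (2 * card R + card P < f \<longrightarrow> card S \<le> final_size s q (card K) (card P) (card R))"
  using assms
proof (induction f arbitrary: K P R W S c)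
  case 0
  then show ?case using cover_inv_covers by auto
next
  case (Suc f)
  note run = Suc.prems(1) and inv = Suc.prems(2)
  have fin: "finite K" "finite P" "finite R"
    using inv finite_subset[of _ "{..<n}"] unfolding cover_inv_def by auto
  have leaf: ?case if "S = K \<union> P \<union> R" "c = 0"
    "final_size s q (card K) (card P) (card R) = card K + card P + card R"
    using that cover_inv_covers[OF inv] card_Un3_le[of K P R] by simp
  consider "card K + card P + card R \<le> s"
    | "\<not> card K + card P + card R \<le> s" "R \<noteq> {}" "card P < q"
    | "\<not> card K + card P + card R \<le> s" "\<not> (R \<noteq> {} \<and> card P < q)" "P = {}"
    | "\<not> card K + card P + card R \<le> s" "\<not> (R \<noteq> {} \<and> card P < q)" "P \<noteq> {}"
    by blast
  then show ?case
  proof cases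
    case 1
    then show ?thesis using run by (intro leaf) (auto simp: final_size.simps)
  next
    case 2
    then have "(S, c) \<in> runs x (compare_all (Min R) (sorted_list_of_set P) W
                 (cover s q f K (insert (Min R) P) (R - {Min R})))"
      using run by simp
    then obtain W' c' where c: "c = c' + card P"
      and run': "(S, c') \<in> runs x (cover s q f K (insert (Min R) P) (R - {Min R}) W')"
      and inv': "cover_inv n x K (insert (Min R) P) (R - {Min R}) W'"
      and cards: "card (insert (Min R) P) = card P + 1" "card (R - {Min R}) = card R - 1"
      by (rule cover_step_insert[OF _ inv \<open>R \<noteq> {}\<close>])
    have "0 < card R" using 2 fin(3) by (simp add: card_gt_0_iff)
    then have IH: "covers n x S" "c' \<le> (q - 1) * (card R - 1)"
      "2 * card R + card P < Suc f \<longrightarrow>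
         card S \<le> final_size s q (card K) (card P + 1) (card R - 1)"
      using Suc.IH[OF run' inv'] cards 2 Suc.prems(4) by auto
    have "c \<le> (q - 1) * (card R - 1) + (q - 1)" using c IH(2) 2 by linarith
    also have "\<dots> = (q - 1) * card R" using \<open>0 < card R\<close> by (cases "card R") simp_all
    finally show ?thesis using IH final_size_insert[of "card K" "card P" "card R" s q] 2 \<open>0 < card R\<close>
      by simp
  next
    case 3
    then have "R = {}" using Suc.prems(4) by simp
    then show ?thesis using run 3 by (intro leaf) (auto simp: final_size.simps)
  next
    case 4
    note step = cover_step_eliminate[OF inv \<open>P \<noteq> {}\<close>]
    have "0 < card P" using fin(2) \<open>P \<noteq> {}\<close> by (simp add: card_gt_0_iff)
    have "(S, c) \<in> runs x (cover s q f (insert (king P W) K) (P - insert (king P W) (king_victims P W)) R W)"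
      using run 4 by simp
    note IH = Suc.IH[OF this step(1) _ Suc.prems(4), unfolded step(2,3)]
    moreover have "card P - 1 - card P div 2 \<le> q" using Suc.prems(3) by linarith
    moreover have "2 * card R + card P < Suc f \<Longrightarrow> 2 * card R + (card P - 1 - card P div 2) < f"
      using \<open>0 < card P\<close> by linarith
    moreover have "final_size s q (card K + 1) (card P - 1 - card P div 2) (card R) =
        final_size s q (card K) (card P) (card R)"
      using 4 fin by (subst (2) final_size.simps) auto
    ultimately show ?thesis by auto
  qed
qed

lemma le_powr_three_halves:
  assumes "k \<le> 3 * s * n" "real s \<le> sqrt (real n)"
  shows "real k \<le> 3 * real n powr (3/2)"
proof -
  have "real n powr (3/2) = real n powr (1 + 1/2)" by simp
  also have "\<dots> = real n * sqrt (real n)" unfolding powr_add by (simp add: powr_half_sqrt)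
  finally have powr: "real n powr (3/2) = real n * sqrt (real n)" .
  have "real k \<le> real (3 * s * n)" using assms(1) by (simp only: of_nat_le_iff)
  also have "\<dots> = 3 * real s * real n" by simp
  also have "\<dots> \<le> 3 * sqrt (real n) * real n" using assms(2) by (intro mult_right_mono) auto
  finally show ?thesis using powr by (simp add: mult.commute)
qed

definition one_cover :: "nat \<Rightarrow> dtree" where
  "one_cover n = cover (floor_sqrt n) (3 * floor_sqrt n + 1) (2 * n + 1) {} {} {..<n} {}"

theorem mainTheorem5:
  shows "\<exists>alg :: nat \<Rightarrow> dtree. \<forall>n \<ge> 81. wf_tree n (alg n) \<and>
           (\<forall>x :: nat \<Rightarrow> real. \<forall>(S, k) \<in> runs x (alg n).
              real k \<le> 3 * real n powr (3/2) \<and>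
              is_max_set 1 n x S \<and> real (card S) \<le> sqrt (real n))"
proof (intro exI[of _ one_cover] allI impI conjI ballI)
  fix n :: nat assume "81 \<le> n"
  show "wf_tree n (one_cover n)" unfolding one_cover_def by (rule wf_tree_cover) simp
  fix x :: "nat \<Rightarrow> real" and run assume "run \<in> runs x (one_cover n)"
  then obtain S k where run: "run = (S, k)" "(S, k) \<in> runs x (one_cover n)" by (cases run) auto
  define s where "s = floor_sqrt n"
  have "s\<^sup>2 \<le> n" "n < (s + 1)\<^sup>2" unfolding s_def using Suc_floor_sqrt_power2_gt by auto
  then have "real s \<le> sqrt (real n)" by (simp add: real_le_rsqrt flip: of_nat_power)
  have "cover_inv n x {} {} {..<n} {}" unfolding cover_inv_def admissible_def by auto
  then have "covers n x S" "k \<le> 3 * s * n" "card S \<le> final_size s (3 * s + 1) 0 0 n"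
    using runs_cover[of S k x s "3 * s + 1" "2 * n + 1" "{}" "{}" "{..<n}" "{}" n] run(2)
    unfolding one_cover_def s_def by auto
  moreover have "final_size s (3 * s + 1) 0 0 n \<le> s"
    using final_size_sqrt \<open>81 \<le> n\<close> \<open>s\<^sup>2 \<le> n\<close> \<open>n < (s + 1)\<^sup>2\<close> by blast
  ultimately show "case run of (S, k) \<Rightarrow> real k \<le> 3 * real n powr (3/2) \<and>
      is_max_set 1 n x S \<and> real (card S) \<le> sqrt (real n)"
    using run(1) \<open>81 \<le> n\<close> \<open>real s \<le> sqrt (real n)\<close> covers_imp_is_max_set
      le_powr_three_halves[of k s n] by auto
qed

end
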